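(* Let $T$ be a c.n.u. contraction on $H$. For $\lambda\in\mathbb{C}$ let $W_\lambda=\{(x,\lambda x):x\in H\}\subseteq\mathbb{H}$ and $N_\lambda=W_\lambda\cap A_T^{\perp_s}$. Then for $|\lambda|<1$, $$N_\lambda=\{((I-\lambda T^* )^{-1}f,\ \lambda(I-\lambda T^* )^{-1}f): f\in\mathbb{K}^\perp\},$$ and for $|\lambda|>1$, $$N_\lambda=\{((\lambda-T)^{-1}f,\ \lambda(\lambda-T)^{-1}f): f\in\mathbb{K}_*^\perp\}.$$
   Context: $H$ is an infinite-dimensional separable complex Hilbert space; $T\in\mathbb{B}(H)$ with $\|T\|\le1$ is completely non-unitary (no nonzero invariant subspace on which $T$ is unitary). $\mathbb{K}=\ker(I-T^*T)$, $\mathbb{K}_*=\ker(I-TT^* )$. $\mathbb{H}=H\oplus_\perp H$ with $[(x_1,x_2),(y_1,y_2)]=i(x_1,y_1)_H-i(x_2,y_2)_H$; $S^{\perp_s}=\{a:[a,b]=0\ \forall b\in S\}$; $A_T=\{(x,Tx):x\in\mathbb{K}\}$. *)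

theory Defs
  imports "HOL-Analysis.Analysis"
begin

class complex_inner_space = real_normed_vector +
  fixes scaleC :: "complex \<Rightarrow> 'a \<Rightarrow> 'a"
    and cinner :: "'a \<Rightarrow> 'a \<Rightarrow> complex"
  assumes scaleC_add_right: "scaleC a (x + y) = scaleC a x + scaleC a y"
    and scaleC_add_left: "scaleC (a + b) x = scaleC a x + scaleC b x"
    and scaleC_scaleC: "scaleC a (scaleC b x) = scaleC (a * b) x"
    and scaleC_one: "scaleC 1 x = x"
    and scaleR_scaleC: "scaleR r x = scaleC (complex_of_real r) x"
    and cinner_add_left: "cinner (x + y) z = cinner x z + cinner y z"
    and cinner_scaleC_left: "cinner (scaleC a x) y = a * cinner x y"
    and cinner_commute: "cinner y x = cnj (cinner x y)"
    and cinner_self_norm: "cinner x x = complex_of_real ((norm x)\<^sup>2)"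

definition cspan :: "'a::complex_inner_space set \<Rightarrow> 'a set" where
  "cspan S = {(\<Sum>v\<in>F. scaleC (c v) v) | F c. finite F \<and> F \<subseteq> S}"

definition bounded_clinear_op :: "('a::complex_inner_space \<Rightarrow> 'a) \<Rightarrow> bool" where
  "bounded_clinear_op T \<longleftrightarrow>
     (\<forall>x y. T (x + y) = T x + T y) \<and> (\<forall>c x. T (scaleC c x) = scaleC c (T x)) \<and>
     (\<exists>K. \<forall>x. norm (T x) \<le> norm x * K)"

definition cadjoint :: "('a::complex_inner_space \<Rightarrow> 'a) \<Rightarrow> ('a \<Rightarrow> 'a)" where
  "cadjoint T = (\<lambda>y. THE z. \<forall>x. cinner (T x) y = cinner x z)"

definition contraction :: "('a::complex_inner_space \<Rightarrow> 'a) \<Rightarrow> bool" where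
  "contraction T \<longleftrightarrow> bounded_clinear_op T \<and> (\<forall>x. norm (T x) \<le> norm x)"

definition csubspace :: "'a::complex_inner_space set \<Rightarrow> bool" where
  "csubspace M \<longleftrightarrow> 0 \<in> M \<and> (\<forall>x\<in>M. \<forall>y\<in>M. x + y \<in> M) \<and> (\<forall>c. \<forall>x\<in>M. scaleC c x \<in> M)"

definition completely_non_unitary :: "('a::complex_inner_space \<Rightarrow> 'a) \<Rightarrow> bool" where
  "completely_non_unitary T \<longleftrightarrow>
     \<not> (\<exists>M. csubspace M \<and> closed M \<and> M \<noteq> {0} \<and> T ` M = M \<and> (\<forall>x\<in>M. norm (T x) = norm x))"

definition orth_compl :: "'a::complex_inner_space set \<Rightarrow> 'a set" where
  "orth_compl S = {y. \<forall>x\<in>S. cinner x y = 0}"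

definition defect_K :: "('a::complex_inner_space \<Rightarrow> 'a) \<Rightarrow> 'a set" where
  "defect_K T = {x. x - cadjoint T (T x) = 0}"

definition defect_K_star :: "('a::complex_inner_space \<Rightarrow> 'a) \<Rightarrow> 'a set" where
  "defect_K_star T = {x. x - T (cadjoint T x) = 0}"

definition sform :: "'a::complex_inner_space \<times> 'a \<Rightarrow> 'a \<times> 'a \<Rightarrow> complex" where
  "sform a b = \<i> * cinner (fst a) (fst b) - \<i> * cinner (snd a) (snd b)"

definition s_orth :: "('a::complex_inner_space \<times> 'a) set \<Rightarrow> ('a \<times> 'a) set" where
  "s_orth S = {a. \<forall>b\<in>S. sform a b = 0}"

definition A_T :: "('a::complex_inner_space \<Rightarrow> 'a) \<Rightarrow> ('a \<times> 'a) set" where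
  "A_T T = {(x, T x) | x. x \<in> defect_K T}"

definition W_lam :: "complex \<Rightarrow> ('a::complex_inner_space \<times> 'a) set" where
  "W_lam l = {(x, scaleC l x) | x. True}"

definition N_lam :: "('a::complex_inner_space \<Rightarrow> 'a) \<Rightarrow> complex \<Rightarrow> ('a \<times> 'a) set" where
  "N_lam T l = W_lam l \<inter> s_orth (A_T T)"

end

theory Submission
  imports Defs
begin

text \<open>A point of \<open>N\<^sub>\<lambda>\<close> is a pair \<open>(x, \<lambda>x)\<close> with \<open>(x, k) = \<lambda> (x, Tk)\<close> for all \<open>k \<in> \<bbbK>\<close>.
  Moving \<open>T\<close> across the inner product turns this into \<open>x - \<lambda>T\<^sup>*x \<bottom> \<bbbK>\<close>; since \<open>T\<close> maps
  \<open>\<bbbK>\<close> onto \<open>\<bbbK>\<^sub>*\<close> with inverse \<open>T\<^sup>*\<close>, it is also equivalent to \<open>\<lambda>x - Tx \<bottom> \<bbbK>\<^sub>*\<close>.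
  As \<open>\<parallel>T\<parallel> = \<parallel>T\<^sup>*\<parallel> \<le> 1\<close>, the operators \<open>I - \<lambda>T\<^sup>*\<close> for \<open>|\<lambda>| < 1\<close> and \<open>\<lambda> - T\<close> for \<open>|\<lambda>| > 1\<close>
  are bijective by the contraction principle, so \<open>N\<^sub>\<lambda>\<close> is the image of the respective
  orthogonal complement under their inverses. The adjoint exists by the Riesz representation theorem, which is proved from the
  existence of nearest points in closed subspaces.\<close>

section \<open>Complex inner product spaces\<close>

lemma mult_cnj_eq_cmod_sq: "z * cnj z = complex_of_real ((cmod z)\<^sup>2)"
  by (simp add: complex_mult_cnj cmod_power2)

lemma scaleC_zero_right [simp]: "scaleC a (0::'a::complex_inner_space) = 0"
proof -
  have "scaleC a (0::'a) = scaleC a 0 + scaleC a 0" using scaleC_add_right[of a "0::'a" 0] by simp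
  then show ?thesis by simp
qed

lemma scaleC_zero_left [simp]: "scaleC 0 (x::'a::complex_inner_space) = 0"
proof -
  have "scaleC 0 x = scaleC 0 x + scaleC 0 x" using scaleC_add_left[of 0 0 x] by simp
  then show ?thesis by simp
qed

lemma scaleC_minus_right: "scaleC a (- x::'a::complex_inner_space) = - scaleC a x"
proof -
  have "scaleC a x + scaleC a (-x) = 0" using scaleC_add_right[of a x "-x"] by simp
  then show ?thesis using add.inverse_unique by metis
qed

lemma scaleC_diff_right: "scaleC a (x - y::'a::complex_inner_space) = scaleC a x - scaleC a y"
  by (simp only: diff_conv_add_uminus scaleC_add_right scaleC_minus_right)

lemma scaleC_minus1: "scaleC (-1) (x::'a::complex_inner_space) = - x"
  using scaleR_scaleC[of "-1" x] by simp

lemma scaleC_minus_left: "scaleC (-a) (x::'a::complex_inner_space) = - scaleC a x"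
  using scaleC_minus1[of "scaleC a x"] by (simp add: scaleC_scaleC)

lemma cinner_zero_left [simp]: "cinner (0::'a::complex_inner_space) y = 0"
  using cinner_scaleC_left[of 0 "0::'a" y] by simp

lemma cinner_zero_right [simp]: "cinner (y::'a::complex_inner_space) 0 = 0"
  using cinner_commute[of y 0] by simp

lemma cinner_minus_left: "cinner (- x::'a::complex_inner_space) y = - cinner x y"
  using cinner_scaleC_left[of "-1" x y] by (simp add: scaleC_minus1)

lemma cinner_diff_left: "cinner (x - z::'a::complex_inner_space) y = cinner x y - cinner z y"
  by (simp only: diff_conv_add_uminus cinner_add_left cinner_minus_left)

lemma cinner_add_right: "cinner (y::'a::complex_inner_space) (x + z) = cinner y x + cinner y z"
  by (metis cinner_add_left cinner_commute complex_cnj_add)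

lemma cinner_scaleC_right: "cinner (y::'a::complex_inner_space) (scaleC a x) = cnj a * cinner y x"
  by (metis cinner_scaleC_left cinner_commute complex_cnj_mult)

lemma cinner_diff_right: "cinner (y::'a::complex_inner_space) (x - z) = cinner y x - cinner y z"
  by (metis cinner_diff_left cinner_commute complex_cnj_diff)

lemma cinner_minus_right: "cinner (y::'a::complex_inner_space) (- x) = - cinner y x"
  using cinner_diff_right[of y 0 x] by simp

lemma cinner_eq_0_sym: "cinner (x::'a::complex_inner_space) y = 0 \<longleftrightarrow> cinner y x = 0"
  using cinner_commute[of x y] by (metis complex_cnj_zero_iff)

lemma cinner_self_eq_0: "cinner (x::'a::complex_inner_space) x = 0 \<longleftrightarrow> x = 0"
  by (simp add: cinner_self_norm)

lemma cinner_ext: "(\<And>x. cinner x y = cinner x (z::'a::complex_inner_space)) \<Longrightarrow> y = z"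
  using cinner_self_eq_0[of "y - z"] by (simp add: cinner_diff_right)

lemma norm_scaleC: "norm (scaleC a (x::'a::complex_inner_space)) = cmod a * norm x"
proof -
  have "cinner (scaleC a x) (scaleC a x) = a * cnj a * cinner x x"
    by (simp add: cinner_scaleC_left cinner_scaleC_right mult.assoc)
  then have "(norm (scaleC a x))\<^sup>2 = (cmod a * norm x)\<^sup>2"
    by (simp only: cinner_self_norm mult_cnj_eq_cmod_sq mult.commute of_real_mult[symmetric]
        of_real_eq_iff power_mult_distrib)
  then show ?thesis by simp
qed

lemma norm_add_sq:
  "(norm (x + y::'a::complex_inner_space))\<^sup>2 = (norm x)\<^sup>2 + (norm y)\<^sup>2 + 2 * Re (cinner x y)"
proof -
  have "cinner (x + y) (x + y) = cinner x x + cinner y y + (cinner x y + cnj (cinner x y))"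
    by (simp add: cinner_add_left cinner_add_right cinner_commute[of x y])
  then have "Re (cinner (x + y) (x + y)) = Re (cinner x x) + Re (cinner y y) + 2 * Re (cinner x y)"
    by simp
  then show ?thesis by (simp add: cinner_self_norm)
qed

lemma norm_diff_scaleC_sq: "(norm (x - scaleC t y::'a::complex_inner_space))\<^sup>2 =
   (norm x)\<^sup>2 + (cmod t)\<^sup>2 * (norm y)\<^sup>2 - 2 * Re (cnj t * cinner x y)"
  using norm_add_sq[of x "scaleC (-t) y"]
  by (simp add: scaleC_minus_left norm_scaleC cinner_minus_right cinner_scaleC_right
      power_mult_distrib)

lemma parallelogram_law:
  "(norm (x + y::'a::complex_inner_space))\<^sup>2 + (norm (x - y))\<^sup>2 = 2 * (norm x)\<^sup>2 + 2 * (norm y)\<^sup>2"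
  using norm_add_sq[of x y] norm_add_sq[of x "-y"] by (simp add: cinner_minus_right)

lemma norm_diff_projection_sq:
  fixes x y :: "'a::complex_inner_space"
  assumes "y \<noteq> 0"
  shows "(norm (x - scaleC (cinner x y / complex_of_real ((norm y)\<^sup>2)) y))\<^sup>2
           = (norm x)\<^sup>2 - (cmod (cinner x y))\<^sup>2 / (norm y)\<^sup>2"
proof -
  define c where "c = cinner x y"
  define n where "n = (norm y)\<^sup>2"
  define t where "t = c / complex_of_real n"
  have "n > 0" unfolding n_def using assms by simp
  have "cmod t = cmod c / n"
    unfolding t_def using \<open>n > 0\<close> by (simp add: norm_divide)
  then have sq: "(cmod t)\<^sup>2 * (norm y)\<^sup>2 = (cmod c)\<^sup>2 / n"
    using \<open>n > 0\<close> unfolding n_def by (simp add: power_divide power2_eq_square)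
  have "cnj t * c = (c * cnj c) / complex_of_real n"
    unfolding t_def by (simp add: mult.commute)
  then have re: "Re (cnj t * c) = (cmod c)\<^sup>2 / n"
    by (simp only: mult_cnj_eq_cmod_sq of_real_divide[symmetric] Re_complex_of_real)
  have "(norm (x - scaleC t y))\<^sup>2 = (norm x)\<^sup>2 + (cmod t)\<^sup>2 * (norm y)\<^sup>2 - 2 * Re (cnj t * c)"
    unfolding c_def by (rule norm_diff_scaleC_sq)
  also have "\<dots> = (norm x)\<^sup>2 - (cmod c)\<^sup>2 / n"
    unfolding sq re by simp
  finally show ?thesis unfolding t_def c_def n_def .
qed

lemma cmod_cinner_le: "cmod (cinner (x::'a::complex_inner_space) y) \<le> norm x * norm y"
proof (cases "y = 0")
  case False
  have "(cmod (cinner x y))\<^sup>2 / (norm y)\<^sup>2 \<le> (norm x)\<^sup>2"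
    using norm_diff_projection_sq[OF False, of x] by (smt (verit) zero_le_power2)
  then have "(cmod (cinner x y))\<^sup>2 \<le> (norm x * norm y)\<^sup>2"
    using False by (simp add: divide_le_eq power_mult_distrib)
  then show ?thesis by (rule power2_le_imp_le) simp
qed simp

lemma orth_compl_iff: "y \<in> orth_compl S \<longleftrightarrow> (\<forall>k\<in>S. cinner y k = 0)"
  unfolding orth_compl_def using cinner_eq_0_sym by blast

section \<open>Nearest points and the Riesz representation theorem\<close>

lemma Cauchy_if_dist_sq_le:
  fixes a :: "nat \<Rightarrow> 'a::metric_space"
  assumes e: "e \<longlonglongrightarrow> 0" and dist_le: "\<And>m n. (dist (a m) (a n))\<^sup>2 \<le> e m + e n"
  shows "Cauchy a"
proof (rule metric_CauchyI)
  fix r :: real assume "r > 0"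
  then have "\<forall>\<^sub>F n in sequentially. e n < r\<^sup>2 / 2"
    using e by (intro order_tendstoD(2)) auto
  then obtain M where M: "\<And>n. n \<ge> M \<Longrightarrow> e n < r\<^sup>2 / 2"
    unfolding eventually_sequentially by blast
  show "\<exists>M. \<forall>m\<ge>M. \<forall>n\<ge>M. dist (a m) (a n) < r"
  proof (intro exI allI impI)
    fix m n assume "M \<le> m" "M \<le> n"
    then have "(dist (a m) (a n))\<^sup>2 < r\<^sup>2" using M[of m] M[of n] dist_le[of m n] by linarith
    then show "dist (a m) (a n) < r" using \<open>r > 0\<close> by (simp add: power_less_imp_less_base)
  qed
qed

text \<open>Parallelogram law for \<open>w - a\<close> and \<open>w - b\<close>, using that \<open>(a + b)/2 \<in> N\<close>.\<close>

lemma csubspace_near_minimisers_close: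
  fixes N :: "'a::complex_inner_space set"
  assumes "csubspace N" and "a \<in> N" and "b \<in> N"
    and "0 \<le> d" and d_le: "\<And>m. m \<in> N \<Longrightarrow> d \<le> norm (w - m)"
  shows "(norm (a - b))\<^sup>2 \<le> 2 * (norm (w - a))\<^sup>2 + 2 * (norm (w - b))\<^sup>2 - 4 * d\<^sup>2"
proof -
  have "scaleR (1/2) (a + b) \<in> N"
    using assms(1-3) unfolding csubspace_def scaleR_scaleC by blast
  then have "2 * d \<le> norm (scaleR 2 (w - scaleR (1/2) (a + b)))"
    using d_le by simp
  also have "scaleR 2 (w - scaleR (1/2) (a + b)) = (w - a) + (w - b)"
    by (simp add: algebra_simps scaleR_2)
  finally have "(2 * d)\<^sup>2 \<le> (norm ((w - a) + (w - b)))\<^sup>2"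
    using \<open>0 \<le> d\<close> by (intro power_mono) auto
  moreover have "norm ((w - a) - (w - b)) = norm (a - b)"
    by (simp add: norm_minus_commute)
  ultimately show ?thesis
    using parallelogram_law[of "w - a" "w - b"] by (simp add: power_mult_distrib)
qed

lemma infdist_minimising_sequence:
  fixes N :: "'a::real_normed_vector set"
  assumes "N \<noteq> {}"
  shows "\<exists>a. \<forall>n. a n \<in> N \<and> (norm (w - a n))\<^sup>2 < (infdist w N)\<^sup>2 + inverse (real (Suc n))"
proof -
  have "\<exists>a\<in>N. (norm (w - a))\<^sup>2 < (infdist w N)\<^sup>2 + inverse (real (Suc n))" for n
  proof -
    define r where "r = sqrt ((infdist w N)\<^sup>2 + inverse (real (Suc n)))"
    have "infdist w N = sqrt ((infdist w N)\<^sup>2)" using infdist_nonneg[of w N] by simp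
    also have "\<dots> < r" unfolding r_def by (intro real_sqrt_less_mono) simp
    finally have "infdist w N < r" .
    then obtain a where "a \<in> N" "dist w a < r"
      using cInf_lessD[of "dist w ` N" r] assms by (auto simp: infdist_notempty)
    then have "(norm (w - a))\<^sup>2 < r\<^sup>2" by (simp add: dist_norm power_strict_mono)
    then show ?thesis using \<open>a \<in> N\<close> unfolding r_def by auto
  qed
  then show ?thesis by metis
qed

lemma closed_csubspace_nearest_point:
  fixes N :: "'a::{complex_inner_space, complete_space} set"
  assumes sub: "csubspace N" and cl: "closed N"
  shows "\<exists>p\<in>N. \<forall>m\<in>N. norm (w - p) \<le> norm (w - m)"
proof -
  define d where "d = infdist w N"
  have "N \<noteq> {}" using sub unfolding csubspace_def by auto
  have "0 \<le> d" unfolding d_def by (rule infdist_nonneg)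
  have d_le: "\<And>m. m \<in> N \<Longrightarrow> d \<le> norm (w - m)"
    unfolding d_def by (metis infdist_le dist_norm)
  obtain a where aN: "\<And>n. a n \<in> N"
    and a_near: "\<And>n. (norm (w - a n))\<^sup>2 < d\<^sup>2 + inverse (real (Suc n))"
    using infdist_minimising_sequence[OF \<open>N \<noteq> {}\<close>] unfolding d_def by blast
  have "Cauchy a"
  proof (rule Cauchy_if_dist_sq_le)
    show "(\<lambda>n. 2 * inverse (real (Suc n))) \<longlonglongrightarrow> 0"
      using tendsto_mult_right_zero[OF LIMSEQ_inverse_real_of_nat] by simp
    show "(dist (a m) (a n))\<^sup>2 \<le> 2 * inverse (real (Suc m)) + 2 * inverse (real (Suc n))" for m n
      using csubspace_near_minimisers_close[OF sub aN aN \<open>0 \<le> d\<close> d_le, of m n] a_near[of m]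
        a_near[of n] by (simp add: dist_norm)
  qed
  then obtain p where lim: "a \<longlonglongrightarrow> p" using Cauchy_convergent_iff convergent_def by blast
  have "p \<in> N" using closed_sequentially[OF cl] aN lim by blast
  have "(norm (w - p))\<^sup>2 \<le> d\<^sup>2"
  proof (rule LIMSEQ_le)
    show "(\<lambda>n. (norm (w - a n))\<^sup>2) \<longlonglongrightarrow> (norm (w - p))\<^sup>2" by (intro tendsto_intros lim)
    show "(\<lambda>n. d\<^sup>2 + inverse (real (Suc n))) \<longlonglongrightarrow> d\<^sup>2"
      using tendsto_add[OF tendsto_const LIMSEQ_inverse_real_of_nat, of "d\<^sup>2"] by simp
    show "\<exists>N. \<forall>n\<ge>N. (norm (w - a n))\<^sup>2 \<le> d\<^sup>2 + inverse (real (Suc n))"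
      using a_near less_imp_le by blast
  qed
  then have "norm (w - p) \<le> d" using \<open>0 \<le> d\<close> by (simp add: power2_le_iff_abs_le)
  then show ?thesis using \<open>p \<in> N\<close> d_le by force
qed

lemma nearest_point_orthogonal:
  fixes N :: "'a::complex_inner_space set"
  assumes sub: "csubspace N" and "p \<in> N" and nearest: "\<And>m. m \<in> N \<Longrightarrow> norm (w - p) \<le> norm (w - m)"
    and "m \<in> N"
  shows "cinner (w - p) m = 0"
proof (cases "m = 0")
  case False
  define t where "t = cinner (w - p) m / complex_of_real ((norm m)\<^sup>2)"
  have "p + scaleC t m \<in> N" using sub \<open>p \<in> N\<close> \<open>m \<in> N\<close> unfolding csubspace_def by blast
  then have "norm (w - p) \<le> norm ((w - p) - scaleC t m)"
    using nearest by (simp add: algebra_simps)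
  then have "(norm (w - p))\<^sup>2 \<le> (norm ((w - p) - scaleC t m))\<^sup>2"
    by (simp add: power_mono)
  then have "(cmod (cinner (w - p) m))\<^sup>2 / (norm m)\<^sup>2 \<le> 0"
    unfolding t_def norm_diff_projection_sq[OF False] by simp
  then show ?thesis using False by (simp add: divide_le_0_iff)
qed simp

lemma closed_csubspace_orthogonal_vector:
  fixes N :: "'a::{complex_inner_space, complete_space} set"
  assumes "csubspace N" and "closed N" and "w \<notin> N"
  shows "\<exists>u. u \<noteq> 0 \<and> (\<forall>m\<in>N. cinner u m = 0)"
proof -
  obtain p where "p \<in> N" and "\<forall>m\<in>N. norm (w - p) \<le> norm (w - m)"
    using closed_csubspace_nearest_point[OF assms(1,2)] by blast
  then have "\<forall>m\<in>N. cinner (w - p) m = 0"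
    using nearest_point_orthogonal[OF assms(1)] by blast
  moreover have "w - p \<noteq> 0" using \<open>p \<in> N\<close> \<open>w \<notin> N\<close> by auto
  ultimately show ?thesis by blast
qed

lemma riesz_representation:
  fixes \<phi> :: "'a::{complex_inner_space, complete_space} \<Rightarrow> complex"
  assumes add: "\<And>x y. \<phi> (x + y) = \<phi> x + \<phi> y"
    and scale: "\<And>c x. \<phi> (scaleC c x) = c * \<phi> x"
    and bound: "\<And>x. cmod (\<phi> x) \<le> norm x * K"
  shows "\<exists>z. \<forall>x. \<phi> x = cinner x z"
proof (cases "\<forall>x. \<phi> x = 0")
  case True
  then show ?thesis by (intro exI[of _ 0]) simp
next
  case False
  then obtain w where "\<phi> w \<noteq> 0" by blast
  define N where "N = {x. \<phi> x = 0}"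
  have "bounded_linear \<phi>"
    by (rule bounded_linear_intro[OF add _ bound]) (simp add: scaleR_scaleC scale scaleR_conv_of_real)
  then have lin: "\<phi> (x - y) = \<phi> x - \<phi> y" for x y by (rule linear_simps)
  have "csubspace N" unfolding csubspace_def N_def using add scale lin[of 0 0] by simp
  moreover have "closed N"
    unfolding N_def by (intro closed_Collect_eq linear_continuous_on[OF \<open>bounded_linear \<phi>\<close>]
      continuous_on_const)
  ultimately obtain u where "u \<noteq> 0" and u_orth: "\<And>m. m \<in> N \<Longrightarrow> cinner u m = 0"
    using closed_csubspace_orthogonal_vector \<open>\<phi> w \<noteq> 0\<close> unfolding N_def by blast
  have uu: "cinner u u \<noteq> 0" using \<open>u \<noteq> 0\<close> cinner_self_eq_0 by blast
  then have "\<phi> u \<noteq> 0" using u_orth unfolding N_def by blast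
  show ?thesis
  proof (intro exI allI)
    fix x
    have "x - scaleC (\<phi> x / \<phi> u) u \<in> N"
      using \<open>\<phi> u \<noteq> 0\<close> by (simp add: N_def lin scale)
    then have "cinner (x - scaleC (\<phi> x / \<phi> u) u) u = 0"
      using u_orth cinner_eq_0_sym by blast
    then have "cinner x u = \<phi> x / \<phi> u * cinner u u"
      unfolding cinner_diff_left cinner_scaleC_left by simp
    then show "\<phi> x = cinner x (scaleC (cnj (\<phi> u / cinner u u)) u)"
      unfolding cinner_scaleC_right using \<open>\<phi> u \<noteq> 0\<close> uu by (simp add: field_simps)
  qed
qed

section \<open>Bounded operators and their adjoints\<close>

context
  fixes T :: "'a::complex_inner_space \<Rightarrow> 'a"
  assumes T: "bounded_clinear_op T"
begin

lemma bounded_clinear_op_add: "T (x + y) = T x + T y"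
  using T unfolding bounded_clinear_op_def by blast

lemma bounded_clinear_op_scaleC: "T (scaleC c x) = scaleC c (T x)"
  using T unfolding bounded_clinear_op_def by blast

lemma bounded_clinear_op_diff: "T (x - y) = T x - T y"
  using bounded_clinear_op_add[of "x - y" y] by (simp add: eq_diff_eq)

lemma bounded_clinear_op_bound: "\<exists>K. \<forall>x. norm (T x) \<le> norm x * K"
  using T unfolding bounded_clinear_op_def by blast

end

lemma contraction_norm_le: "contraction T \<Longrightarrow> norm (T x) \<le> norm x"
  unfolding contraction_def by blast

lemma contraction_bounded_clinear_op: "contraction T \<Longrightarrow> bounded_clinear_op T"
  unfolding contraction_def by blast

context
  fixes T :: "'a::{complex_inner_space, complete_space} \<Rightarrow> 'a"
  assumes T: "bounded_clinear_op T"
begin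

lemma cinner_cadjoint: "cinner (T x) y = cinner x (cadjoint T y)"
proof -
  obtain K where K: "\<And>x. norm (T x) \<le> norm x * K" using bounded_clinear_op_bound[OF T] by blast
  have "\<exists>z. \<forall>x. cinner (T x) y = cinner x z"
  proof (rule riesz_representation[where K = "K * norm y"])
    show "cinner (T (a + b)) y = cinner (T a) y + cinner (T b) y" for a b
      by (simp add: bounded_clinear_op_add[OF T] cinner_add_left)
    show "cinner (T (scaleC c a)) y = c * cinner (T a) y" for c a
      by (simp add: bounded_clinear_op_scaleC[OF T] cinner_scaleC_left)
    show "cmod (cinner (T a) y) \<le> norm a * (K * norm y)" for a
      using cmod_cinner_le[of "T a" y] mult_right_mono[OF K[of a] norm_ge_zero[of y]]
      by (simp add: mult.assoc)
  qed
  then obtain z where z: "\<forall>x. cinner (T x) y = cinner x z" by blast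
  then have "\<exists>!z. \<forall>x. cinner (T x) y = cinner x z"
    by (intro ex1I[of _ z]) (auto intro: cinner_ext)
  from theI'[OF this] show ?thesis unfolding cadjoint_def by blast
qed

lemma cinner_cadjoint_right: "cinner x (T y) = cinner (cadjoint T x) y"
proof -
  have "cinner x (T y) = cnj (cinner (T y) x)" by (rule cinner_commute)
  also have "\<dots> = cnj (cinner y (cadjoint T x))" by (simp only: cinner_cadjoint)
  also have "\<dots> = cinner (cadjoint T x) y" by (rule cinner_commute[symmetric])
  finally show ?thesis .
qed

lemma cadjoint_add: "cadjoint T (x + y) = cadjoint T x + cadjoint T y"
  by (rule cinner_ext) (simp flip: cinner_cadjoint add: cinner_add_right)

lemma cadjoint_scaleC: "cadjoint T (scaleC c x) = scaleC c (cadjoint T x)"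
  by (rule cinner_ext) (simp flip: cinner_cadjoint add: cinner_scaleC_right)

end

lemma norm_cadjoint_le:
  fixes T :: "'a::{complex_inner_space, complete_space} \<Rightarrow> 'a"
  assumes "contraction T"
  shows "norm (cadjoint T y) \<le> norm y"
proof -
  note T = contraction_bounded_clinear_op[OF assms]
  define z where "z = cadjoint T y"
  have "(norm z)\<^sup>2 = Re (cinner z z)" by (simp add: cinner_self_norm)
  also have "\<dots> = Re (cinner (T z) y)" by (simp only: z_def cinner_cadjoint[OF T])
  also have "\<dots> \<le> norm (T z) * norm y"
    using cmod_cinner_le[of "T z" y] complex_Re_le_cmod by (rule order_trans[rotated])
  also have "\<dots> \<le> norm z * norm y"
    using contraction_norm_le[OF assms] by (intro mult_right_mono) auto
  finally have "norm z * norm z \<le> norm z * norm y"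
    by (simp add: power2_eq_square)
  then show ?thesis
    unfolding z_def[symmetric] by (cases "z = 0") (simp_all add: mult_le_cancel_left_pos)
qed

lemma contraction_cadjoint:
  fixes T :: "'a::{complex_inner_space, complete_space} \<Rightarrow> 'a"
  assumes "contraction T"
  shows "contraction (cadjoint T)"
proof -
  note T = contraction_bounded_clinear_op[OF assms]
  have "\<forall>x. norm (cadjoint T x) \<le> norm x * 1"
    using norm_cadjoint_le[OF assms] by simp
  then show ?thesis
    unfolding contraction_def bounded_clinear_op_def
    using cadjoint_add[OF T] cadjoint_scaleC[OF T] norm_cadjoint_le[OF assms] by blast
qed

section \<open>Invertibility of perturbations of the identity\<close>

lemma ex1_diff_scaleC_contraction_eq:
  fixes A :: "'a::{complex_inner_space, complete_space} \<Rightarrow> 'a"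
  assumes A: "contraction A" and c: "cmod c < 1"
  shows "\<exists>!x. x - scaleC c (A x) = f"
proof -
  define F where "F x = f + scaleC c (A x)" for x
  have "\<exists>!x. F x = x"
  proof (rule banach_fix_type[OF norm_ge_zero c], intro allI)
    fix x y
    have "F x - F y = scaleC c (A (x - y))"
      unfolding F_def bounded_clinear_op_diff[OF contraction_bounded_clinear_op[OF A]]
        scaleC_diff_right by simp
    then have "dist (F x) (F y) = cmod c * norm (A (x - y))"
      by (simp add: dist_norm norm_scaleC)
    also have "\<dots> \<le> cmod c * dist x y"
      using contraction_norm_le[OF A] by (simp add: dist_norm mult_left_mono)
    finally show "dist (F x) (F y) \<le> cmod c * dist x y" .
  qed
  moreover have "F x = x \<longleftrightarrow> x - scaleC c (A x) = f" for x
    unfolding F_def by (auto simp: algebra_simps)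
  ultimately show ?thesis by simp
qed

lemma bij_id_minus_scaleC_cadjoint:
  fixes T :: "'a::{complex_inner_space, complete_space} \<Rightarrow> 'a"
  assumes "contraction T" and "cmod l < 1"
  shows "bij (\<lambda>x. x - scaleC l (cadjoint T x))"
  unfolding bij_iff
  using ex1_diff_scaleC_contraction_eq[OF contraction_cadjoint[OF assms(1)] assms(2)] by blast

lemma bij_scaleC_minus:
  fixes T :: "'a::{complex_inner_space, complete_space} \<Rightarrow> 'a"
  assumes "contraction T" and "1 < cmod l"
  shows "bij (\<lambda>x. scaleC l x - T x)"
  unfolding bij_iff
proof
  fix f
  have "l \<noteq> 0" using assms(2) by auto
  have scaleC_eq_iff: "scaleC l y = g \<longleftrightarrow> y = scaleC (1 / l) g" for y g
    using \<open>l \<noteq> 0\<close> by (auto simp: scaleC_scaleC scaleC_one)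
  have "scaleC l x - T x = scaleC l (x - scaleC (1 / l) (T x))" for x
    using \<open>l \<noteq> 0\<close> by (simp add: scaleC_diff_right scaleC_scaleC scaleC_one)
  then have "scaleC l x - T x = f \<longleftrightarrow> x - scaleC (1 / l) (T x) = scaleC (1 / l) f" for x
    by (simp only: scaleC_eq_iff)
  moreover have "cmod (1 / l) < 1" using assms(2) by (simp add: norm_divide divide_less_eq_1)
  ultimately show "\<exists>!x. scaleC l x - T x = f"
    using ex1_diff_scaleC_contraction_eq[OF assms(1), of "1 / l" "scaleC (1 / l) f"] by simp
qed

section \<open>The sets \<open>N\<^sub>\<lambda>\<close>\<close>

lemma graph_set_eq_image_inv:
  assumes "bij g"
    and mem_iff: "\<And>x. (x, h x) \<in> N \<longleftrightarrow> g x \<in> S"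
    and graph: "\<And>p. p \<in> N \<Longrightarrow> \<exists>x. p = (x, h x)"
  shows "N = (\<lambda>f. (inv g f, h (inv g f))) ` S"
proof
  have inv_g: "inv g (g x) = x" for x using bij_is_inj[OF \<open>bij g\<close>] by simp
  have g_inv: "g (inv g f) = f" for f using bij_is_surj[OF \<open>bij g\<close>] by (rule surj_f_inv_f)
  show "N \<subseteq> (\<lambda>f. (inv g f, h (inv g f))) ` S"
  proof
    fix p assume "p \<in> N"
    then obtain x where x: "p = (x, h x)" using graph by blast
    then have "g x \<in> S" using \<open>p \<in> N\<close> mem_iff by simp
    then show "p \<in> (\<lambda>f. (inv g f, h (inv g f))) ` S"
      by (rule image_eqI[rotated]) (simp add: x inv_g)
  qed
  show "(\<lambda>f. (inv g f, h (inv g f))) ` S \<subseteq> N"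
    using mem_iff g_inv by auto
qed

lemma N_lam_elem_graph: "p \<in> N_lam T l \<Longrightarrow> \<exists>x. p = (x, scaleC l x)"
  unfolding N_lam_def W_lam_def by auto

lemma graph_mem_N_lam_iff:
  "(x, scaleC l x) \<in> N_lam T l \<longleftrightarrow> (\<forall>k\<in>defect_K T. cinner x k = l * cinner x (T k))"
  unfolding N_lam_def W_lam_def s_orth_def A_T_def sform_def
  by (auto simp: cinner_scaleC_left right_diff_distrib)

lemma cadjoint_mem_defect_K: "m \<in> defect_K_star T \<Longrightarrow> cadjoint T m \<in> defect_K T"
  unfolding defect_K_def defect_K_star_def by simp

lemma mem_defect_K_star: "k \<in> defect_K T \<Longrightarrow> T k \<in> defect_K_star T"
  unfolding defect_K_def defect_K_star_def by simp

context
  fixes T :: "'a::{complex_inner_space, complete_space} \<Rightarrow> 'a"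
  assumes T: "bounded_clinear_op T"
begin

lemma graph_mem_N_lam_iff_orth_defect_K:
  "(x, scaleC l x) \<in> N_lam T l \<longleftrightarrow> x - scaleC l (cadjoint T x) \<in> orth_compl (defect_K T)"
  unfolding graph_mem_N_lam_iff orth_compl_iff
  by (simp add: cinner_diff_left cinner_scaleC_left cinner_cadjoint_right[OF T])

lemma graph_mem_N_lam_iff_orth_defect_K_star:
  "(x, scaleC l x) \<in> N_lam T l \<longleftrightarrow> scaleC l x - T x \<in> orth_compl (defect_K_star T)"
proof -
  have inner: "cinner (scaleC l x - T x) m = l * cinner x m - cinner x (cadjoint T m)" for m
    by (simp add: cinner_diff_left cinner_scaleC_left cinner_cadjoint[OF T])
  show ?thesis
    unfolding graph_mem_N_lam_iff orth_compl_iff inner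
  proof
    assume K: "\<forall>k\<in>defect_K T. cinner x k = l * cinner x (T k)"
    show "\<forall>m\<in>defect_K_star T. l * cinner x m - cinner x (cadjoint T m) = 0"
    proof
      fix m assume "m \<in> defect_K_star T"
      then have "T (cadjoint T m) = m" unfolding defect_K_star_def by simp
      then show "l * cinner x m - cinner x (cadjoint T m) = 0"
        using K cadjoint_mem_defect_K[OF \<open>m \<in> defect_K_star T\<close>] by simp
    qed
  next
    assume K_star: "\<forall>m\<in>defect_K_star T. l * cinner x m - cinner x (cadjoint T m) = 0"
    show "\<forall>k\<in>defect_K T. cinner x k = l * cinner x (T k)"
    proof
      fix k assume "k \<in> defect_K T"
      then have "cadjoint T (T k) = k" unfolding defect_K_def by simp
      then show "cinner x k = l * cinner x (T k)"
        using K_star mem_defect_K_star[OF \<open>k \<in> defect_K T\<close>] by fastforce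
    qed
  qed
qed

end

lemma N_lam_inside_unit_disc:
  fixes T :: "'a::{complex_inner_space, complete_space} \<Rightarrow> 'a"
  assumes "contraction T" and "cmod l < 1"
  shows "N_lam T l = (\<lambda>f. (inv (\<lambda>x. x - scaleC l (cadjoint T x)) f,
                             scaleC l (inv (\<lambda>x. x - scaleC l (cadjoint T x)) f)))
                       ` orth_compl (defect_K T)"
  using bij_id_minus_scaleC_cadjoint[OF assms]
    graph_mem_N_lam_iff_orth_defect_K[OF contraction_bounded_clinear_op[OF assms(1)]] N_lam_elem_graph
  by (rule graph_set_eq_image_inv)

lemma N_lam_outside_unit_disc:
  fixes T :: "'a::{complex_inner_space, complete_space} \<Rightarrow> 'a"
  assumes "contraction T" and "1 < cmod l"
  shows "N_lam T l = (\<lambda>f. (inv (\<lambda>x. scaleC l x - T x) f, scaleC l (inv (\<lambda>x. scaleC l x - T x) f)))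
                       ` orth_compl (defect_K_star T)"
  using bij_scaleC_minus[OF assms]
    graph_mem_N_lam_iff_orth_defect_K_star[OF contraction_bounded_clinear_op[OF assms(1)]] N_lam_elem_graph
  by (rule graph_set_eq_image_inv)

theorem proposition4p4:
  fixes T :: "'a::{complex_inner_space, complete_space} \<Rightarrow> 'a"
  assumes separable: "\<exists>D::'a set. countable D \<and> closure D = UNIV"
    and infinite_dim: "\<forall>S::'a set. finite S \<longrightarrow> cspan S \<noteq> UNIV"
    and contr: "contraction T"
    and cnu: "completely_non_unitary T"
  shows "(\<forall>l. cmod l < 1 \<longrightarrow>
            N_lam T l = (\<lambda>f. (inv (\<lambda>x. x - scaleC l (cadjoint T x)) f,
                              scaleC l (inv (\<lambda>x. x - scaleC l (cadjoint T x)) f)))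
                        ` orth_compl (defect_K T))
       \<and> (\<forall>l. cmod l > 1 \<longrightarrow>
            N_lam T l = (\<lambda>f. (inv (\<lambda>x. scaleC l x - T x) f,
                              scaleC l (inv (\<lambda>x. scaleC l x - T x) f)))
                        ` orth_compl (defect_K_star T))"
  using N_lam_inside_unit_disc[OF contr] N_lam_outside_unit_disc[OF contr] by blast

end
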